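(* Let the existence, consistency and well-configuredness assumptions below hold. Suppose $f(x)=\sum_{i=1}^m f_i(x_i)$ is strictly convex on $\mathbb{R}^{mn}$ and each $f_i$ is convex for all $i\in\mathcal{V}$. Then for any given $x(0)$, the distributed update $$\dot{x}_i(t) = -\nabla f_i(x_i(t)) - \sum_{j\in\mathcal{N}_i} P_{ij}(\lambda_i(t)-\lambda_j(t)) - \sum_{j\in\mathcal{N}_i} P_{ij}(x_i(t)-x_j(t)-\bar b_{ij}),\qquad \dot{\lambda}_i(t) = \sum_{j\in\mathcal{N}_i} P_{ij}(x_i(t)-x_j(t)-\bar b_{ij}),$$ with $P_{ij} = A_{ij}'(A_{ij}A_{ij}')^{-1}A_{ij}$ and $\bar b_{ij} = A_{ij}'(A_{ij}A_{ij}')^{-1}b_{ij}$, drives each $x_i(t)$ to converge asymptotically to a constant $x_i^*$, $i\in\mathcal{V}$, such that $(x_1^*,\dots,x_m^* )$ solves $$\min_{x_1,\dots,x_m}\ \sum_{i=1}^m f_i(x_i)\quad \text{s.t.}\quad A_{ij}(x_i-x_j)=b_{ij},\ \forall (i,j)\in\mathcal{E}.$$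
   Context: A multi-agent system of $m$ agents $\mathcal{V}=\{1,\dots,m\}$; agent $i$ is a single integrator with state $x_i\in\mathbb{R}^n$ and communicates bidirectionally with neighbors $\mathcal{N}_i$ ($i\notin\mathcal{N}_i$); $\mathbb{G}=\{\mathcal{V},\mathcal{E}\}$ is the undirected graph with $\bar m=|\mathcal{E}|$ edges. Each $f_i:\mathbb{R}^n\to\mathbb{R}$ is continuously differentiable and convex, known only to agent $i$. $A_{ij}\in\mathbb{R}^{d_{ij}\times n}$, $b_{ij}\in\mathbb{R}^{d_{ij}}$ are constant, known to agent $i$ (with $A_{ij}A_{ij}'$ invertible). $x=\mathrm{col}\{x_1,\dots,x_m\}$, $\lambda=\mathrm{col}\{\lambda_1,\dots,\lambda_m\}\in\mathbb{R}^{mn}$ are Lagrange multipliers. Let $H\in\mathbb{R}^{\bar m\times m}$ be the oriented incidence matrix of $\mathbb{G}$ (orientations consistent with the $b_{ij}$), $\bar H = H\otimes I_n$, $\bar P=\mathrm{diag}\{P_{i_1j_1},\dots,P_{i_{\bar m}j_{\bar m}}\}$, $\bar b = \mathrm{col}\{\bar b_{i_1j_1},\dots,\bar b_{i_{\bar m}j_{\bar m}}\}$ where $(i_l,j_l)$ is the $l$-th edge. Assumptions: (Existence) the optimization problem has at least one solution satisfying the edge agreements; (Consistency) $A_{ij}=A_{ji}$, $b_{ij}=-b_{ji}$ for all $(i,j)\in\mathcal{E}$; (Well-configured) $\mathbb{G}$ is connected and $\ker \bar H' \cap \mathrm{image}\,\bar P = \{0\}$. The update is the saddle-point (gradient descent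 in $x$, ascent in $\lambda$) dynamics of the augmented Lagrangian $F(x,\lambda)=f(x)+\lambda'\bar H'\bar P(\bar Hx-\bar b)+\tfrac12\|\bar P(\bar Hx-\bar b)\|^2$. *)

theory Defs
  imports "HOL-Analysis.Analysis" "Jordan_Normal_Form.Matrix"
begin

text \<open>An agent's constraint matrix A_ij in R^(d x n) is given by its list of d rs
  (each row a vector in R^n, represented as real^'n); b_ij in R^d is a list of length d.\<close>

definition Amul :: "(real^'n) list \<Rightarrow> real^'n \<Rightarrow> real list" where
  "Amul rs x = map (\<lambda>r. inner r x) rs"

definition ATmul :: "(real^'n) list \<Rightarrow> real list \<Rightarrow> real^'n" where
  "ATmul rs c = (\<Sum>k<length rs. (c ! k) *\<^sub>R (rs ! k))"

definition gram :: "(real^'n) list \<Rightarrow> real mat" where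
  "gram rs = mat (length rs) (length rs) (\<lambda>(k,l). inner (rs ! k) (rs ! l))"

text \<open>(A A')^{-1} (well defined when A A' is invertible).\<close>
definition gram_inv :: "(real^'n) list \<Rightarrow> real mat" where
  "gram_inv rs = (THE M. M \<in> carrier_mat (length rs) (length rs) \<and>
      gram rs * M = 1\<^sub>m (length rs) \<and> M * gram rs = 1\<^sub>m (length rs))"

definition Ginv_mul :: "(real^'n) list \<Rightarrow> real list \<Rightarrow> real list" where
  "Ginv_mul rs c = map (\<lambda>k. \<Sum>l<length rs. gram_inv rs $$ (k,l) * c ! l) [0..<length rs]"

definition Pmul :: "(real^'n) list \<Rightarrow> real^'n \<Rightarrow> real^'n" where
  "Pmul rs x = ATmul rs (Ginv_mul rs (Amul rs x))"

definition bbar :: "(real^'n) list \<Rightarrow> real list \<Rightarrow> real^'n" where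
  "bbar rs b = ATmul rs (Ginv_mul rs b)"

definition strict_convex_fun :: "('a::real_vector \<Rightarrow> real) \<Rightarrow> bool" where
  "strict_convex_fun f \<longleftrightarrow> (\<forall>x y u. x \<noteq> y \<and> 0 < u \<and> u < 1 \<longrightarrow>
      f (u *\<^sub>R x + (1 - u) *\<^sub>R y) < u * f x + (1 - u) * f y)"

definition connected_graph :: "('v \<Rightarrow> 'v \<Rightarrow> bool) \<Rightarrow> bool" where
  "connected_graph adj \<longleftrightarrow> (\<forall>i j. adj\<^sup>*\<^sup>* i j)"

definition orientation :: "('v \<Rightarrow> 'v \<Rightarrow> bool) \<Rightarrow> ('v \<times> 'v) list \<Rightarrow> bool" where
  "orientation adj es \<longleftrightarrow> distinct es \<and> (\<forall>(i,j)\<in>set es. adj i j) \<and>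
     (\<forall>i j. adj i j \<longrightarrow> ((i,j) \<in> set es \<or> (j,i) \<in> set es)) \<and>
     (\<forall>i j. \<not> ((i,j) \<in> set es \<and> (j,i) \<in> set es))"

definition incidence :: "('v \<times> 'v) list \<Rightarrow> nat \<Rightarrow> 'v \<Rightarrow> real" where
  "incidence es l v = (if v = fst (es ! l) then 1 else if v = snd (es ! l) then -1 else 0)"

text \<open>ker (H \<otimes> I_n)' \<inter> image Pbar = {0}, where y = col{y_1,...,y_mbar} in R^(mbar n),
  Pbar = diag{P_{i_1 j_1},...}, and ((H \<otimes> I_n)' y)_v = \<Sum>_l H l v y_l.\<close>
definition well_configured ::
  "('v::finite \<times> 'v) list \<Rightarrow> ('v \<Rightarrow> 'v \<Rightarrow> (real^'n) list) \<Rightarrow> bool" where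
  "well_configured es A \<longleftrightarrow> (\<forall>y :: nat \<Rightarrow> real^'n.
      (\<forall>l<length es. y l \<in> range (Pmul (A (fst (es!l)) (snd (es!l))))) \<and>
      (\<forall>v. (\<Sum>l<length es. incidence es l v *\<^sub>R y l) = 0)
      \<longrightarrow> (\<forall>l<length es. y l = 0))"

definition feasible ::
  "('v \<Rightarrow> 'v \<Rightarrow> bool) \<Rightarrow> ('v \<Rightarrow> 'v \<Rightarrow> (real^'n) list) \<Rightarrow> ('v \<Rightarrow> 'v \<Rightarrow> real list)
    \<Rightarrow> ('v \<Rightarrow> real^'n) \<Rightarrow> bool" where
  "feasible adj A b x \<longleftrightarrow> (\<forall>i j. adj i j \<longrightarrow> Amul (A i j) (x i - x j) = b i j)"

definition solves_problem ::
  "('v::finite \<Rightarrow> real^'n \<Rightarrow> real) \<Rightarrow> ('v \<Rightarrow> 'v \<Rightarrow> bool) \<Rightarrow> ('v \<Rightarrow> 'v \<Rightarrow> (real^'n) list)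
    \<Rightarrow> ('v \<Rightarrow> 'v \<Rightarrow> real list) \<Rightarrow> ('v \<Rightarrow> real^'n) \<Rightarrow> bool" where
  "solves_problem f adj A b x \<longleftrightarrow> feasible adj A b x \<and>
     (\<forall>y. feasible adj A b y \<longrightarrow> (\<Sum>i\<in>UNIV. f i (x i)) \<le> (\<Sum>i\<in>UNIV. f i (y i)))"

end

theory Submission
  imports Defs
begin

(* Let xs be a solution, G the gradient map of f = sum_i f_i and L = H' P H, which is
   self-adjoint and positive semidefinite. Moving xs along ker L keeps every edge constraint
   satisfied, so by minimality G xs is orthogonal to ker L and hence lies in the range of L:
   there is a Lagrange multiplier ls with G xs + L ls = 0. In the shifted variables
   e = x - xs and m = lambda - ls the update reads
     e' = - (G x - G xs) - L m - L e,    m' = L e,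
   so V = |e|^2 + |m|^2 satisfies V' = - 2 <e, G x - G xs> - 2 <e, L e> <= 0, the cross terms
   cancelling by self-adjointness. Hence the trajectory stays bounded and x is uniformly
   continuous, and since strict convexity makes <e, G x - G xs> positive away from xs, a
   Barbalat-type argument forces x(t) to converge to xs. *)

lemma gram_inv_right_inverse:
  assumes "invertible_mat (gram rs)"
  shows "gram_inv rs \<in> carrier_mat (length rs) (length rs)"
    and "gram rs * gram_inv rs = 1\<^sub>m (length rs)"
proof -
  let ?d = "length rs" and ?G = "gram rs"
  have G: "?G \<in> carrier_mat ?d ?d" by (simp add: gram_def)
  obtain B where GB: "?G * B = 1\<^sub>m ?d" and BG: "B * ?G = 1\<^sub>m (dim_row B)"
    using assms G unfolding invertible_mat_def inverts_mat_def by auto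
  have B: "B \<in> carrier_mat ?d ?d"
    using GB BG G by (metis carrier_matD(2) carrier_matI index_mult_mat(3) index_one_mat(3))
  have "gram_inv rs = B"
    unfolding gram_inv_def
  proof (rule the_equality)
    show "B \<in> carrier_mat ?d ?d \<and> ?G * B = 1\<^sub>m ?d \<and> B * ?G = 1\<^sub>m ?d"
      using B GB BG by auto
    fix M assume M: "M \<in> carrier_mat ?d ?d \<and> ?G * M = 1\<^sub>m ?d \<and> M * ?G = 1\<^sub>m ?d"
    then have "M = M * (?G * B)" using GB right_mult_one_mat[of M ?d ?d] by simp
    also have "\<dots> = (M * ?G) * B" by (rule assoc_mult_mat[symmetric]) (use M G B in auto)
    also have "\<dots> = B" using M B by simp
    finally show "M = B" .
  qed
  then show "gram_inv rs \<in> carrier_mat ?d ?d" and "?G * gram_inv rs = 1\<^sub>m ?d"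
    using B GB by simp_all
qed

lemma Pmul_eq_sum:
  "Pmul rs x = (\<Sum>k<length rs. (\<Sum>l<length rs. gram_inv rs $$ (k, l) * inner (rs ! l) x) *\<^sub>R rs ! k)"
  by (simp add: Pmul_def ATmul_def Ginv_mul_def Amul_def)

lemma bounded_linear_Pmul: "bounded_linear (Pmul rs)"
  unfolding Pmul_eq_sum[abs_def]
  by (intro bounded_linear_sum bounded_linear_compose[OF bounded_linear_scaleR_left]
      bounded_linear_compose[OF bounded_linear_mult_right] bounded_linear_inner_right)

lemma linear_Pmul: "linear (Pmul rs)"
  using bounded_linear_Pmul by (rule bounded_linear.linear)

lemma inner_row_Pmul:
  assumes "invertible_mat (gram rs)" and "r \<in> set rs"
  shows "inner r (Pmul rs x) = inner r x"
proof -
  let ?d = "length rs" and ?M = "gram_inv rs"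
  obtain k where k: "k < ?d" "r = rs ! k" using assms(2) by (auto simp: in_set_conv_nth)
  have GM: "(\<Sum>m<?d. inner (rs ! k) (rs ! m) * ?M $$ (m, l)) = (if k = l then 1 else 0)"
    if l: "l < ?d" for l
  proof -
    have "(gram rs * ?M) $$ (k, l) = (\<Sum>m<?d. inner (rs ! k) (rs ! m) * ?M $$ (m, l))"
      using gram_inv_right_inverse(1)[OF assms(1)] k l
      by (simp add: scalar_prod_def gram_def lessThan_atLeast0)
    then show ?thesis using gram_inv_right_inverse(2)[OF assms(1)] k l by simp
  qed
  have "inner (rs ! k) (Pmul rs x)
      = (\<Sum>m<?d. inner (rs ! k) (rs ! m) * (\<Sum>l<?d. ?M $$ (m, l) * inner (rs ! l) x))"
    by (simp add: Pmul_eq_sum inner_sum_right mult.commute)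
  also have "\<dots> = (\<Sum>l<?d. (\<Sum>m<?d. inner (rs ! k) (rs ! m) * ?M $$ (m, l)) * inner (rs ! l) x)"
    by (simp add: sum_distrib_left sum_distrib_right mult.assoc) (rule sum.swap)
  also have "\<dots> = (\<Sum>l<?d. if k = l then inner (rs ! l) x else 0)"
    by (intro sum.cong) (simp_all add: GM)
  also have "\<dots> = inner (rs ! k) x" using k by simp
  finally show ?thesis using k by simp
qed

lemma Pmul_in_span: "Pmul rs x \<in> span (set rs)"
  unfolding Pmul_eq_sum by (intro span_sum span_scale span_base) simp

text \<open>By the two facts above, \<^term>\<open>Pmul rs\<close> is the orthogonal projection onto
  \<^term>\<open>span (set rs)\<close>.\<close>

lemma inner_Pmul_eq_inner_Pmul_Pmul:
  assumes "invertible_mat (gram rs)"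
  shows "inner u (Pmul rs x) = inner (Pmul rs u) (Pmul rs x)"
proof -
  have "Linear_Algebra.orthogonal (u - Pmul rs u) (Pmul rs x)"
    using Pmul_in_span by (rule orthogonal_to_span)
      (simp add: Linear_Algebra.orthogonal_def inner_diff_right inner_commute
        inner_row_Pmul[OF assms])
  then show ?thesis by (simp add: Linear_Algebra.orthogonal_def inner_diff_left)
qed

lemma inner_Pmul_commute:
  assumes "invertible_mat (gram rs)"
  shows "inner u (Pmul rs x) = inner (Pmul rs u) x"
  using inner_Pmul_eq_inner_Pmul_Pmul[OF assms, of u x]
    inner_Pmul_eq_inner_Pmul_Pmul[OF assms, of x u]
  by (simp add: inner_commute)

lemma inner_Pmul_self:
  assumes "invertible_mat (gram rs)"
  shows "inner x (Pmul rs x) = (norm (Pmul rs x))\<^sup>2"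
  using inner_Pmul_eq_inner_Pmul_Pmul[OF assms, of x x] by (simp add: power2_norm_eq_inner)

lemma Pmul_eq_0_imp_orthogonal_rows:
  assumes "invertible_mat (gram rs)" and "Pmul rs x = 0" and "r \<in> set rs"
  shows "inner r x = 0"
  using inner_row_Pmul[OF assms(1,3), of x] assms(2) by simp

text \<open>The operator \<open>H' P H\<close> of the paper (\<open>H\<close> the incidence matrix, \<open>P\<close> the block
  diagonal of the edge projections), written vertex by vertex.\<close>

definition proj_laplacian ::
  "('v::finite \<Rightarrow> 'v \<Rightarrow> bool) \<Rightarrow> ('v \<Rightarrow> 'v \<Rightarrow> (real^'n) list) \<Rightarrow> real^'n^'v \<Rightarrow> real^'n^'v" where
  "proj_laplacian adj A U = (\<chi> i. \<Sum>j\<in>{j. adj i j}. Pmul (A i j) (U $ i - U $ j))"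

lemma linear_proj_laplacian: "linear (proj_laplacian adj A)"
proof (rule linearI)
  fix U W and c :: real
  show "proj_laplacian adj A (U + W) = proj_laplacian adj A U + proj_laplacian adj A W"
    by (simp add: proj_laplacian_def Finite_Cartesian_Product.vec_eq_iff sum.distrib add_diff_add
        linear_add[OF linear_Pmul])
  show "proj_laplacian adj A (c *\<^sub>R U) = c *\<^sub>R proj_laplacian adj A U"
    by (simp add: proj_laplacian_def Finite_Cartesian_Product.vec_eq_iff scaleR_sum_right
        linear_scale[OF linear_Pmul] flip: scaleR_diff_right)
qed

lemma sum_Pmul_diff_bbar_eq_proj_laplacian:
  assumes "feasible adj A b xs"
  shows "(\<Sum>j\<in>{j. adj i j}. Pmul (A i j) (Y $ i - Y $ j) - bbar (A i j) (b i j)) =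
    proj_laplacian adj A (Y - (\<chi> k. xs k)) $ i"
  unfolding proj_laplacian_def
proof (simp, intro sum.cong refl)
  fix j assume "j \<in> {j. adj i j}"
  then have "bbar (A i j) (b i j) = Pmul (A i j) (xs i - xs j)"
    using assms by (simp add: feasible_def bbar_def Pmul_def)
  moreover have "Y $ i - xs i - (Y $ j - xs j) = (Y $ i - Y $ j) - (xs i - xs j)"
    by simp
  ultimately show "Pmul (A i j) (Y $ i - Y $ j) - bbar (A i j) (b i j) =
      Pmul (A i j) (Y $ i - xs i - (Y $ j - xs j))"
    by (simp only: linear_diff[OF linear_Pmul])
qed

lemma sum_adjacent_swap:
  fixes g :: "'v::finite \<Rightarrow> 'v \<Rightarrow> 'a::comm_monoid_add"
  assumes adj_sym: "\<And>i j. adj i j \<Longrightarrow> adj j i"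
  shows "(\<Sum>i\<in>UNIV. \<Sum>j\<in>{j. adj i j}. g i j) = (\<Sum>i\<in>UNIV. \<Sum>j\<in>{j. adj i j}. g j i)"
proof -
  have "(\<Sum>i\<in>UNIV. \<Sum>j\<in>{j. adj i j}. g i j) = (\<Sum>i\<in>UNIV. \<Sum>j\<in>UNIV. if adj i j then g i j else 0)"
    by (simp add: sum.If_cases)
  also have "\<dots> = (\<Sum>j\<in>UNIV. \<Sum>i\<in>UNIV. if adj i j then g i j else 0)"
    by (rule sum.swap)
  also have "\<dots> = (\<Sum>j\<in>UNIV. \<Sum>i\<in>UNIV. if adj j i then g i j else 0)"
    using adj_sym by (intro sum.cong refl) metis
  also have "\<dots> = (\<Sum>i\<in>UNIV. \<Sum>j\<in>{j. adj i j}. g j i)"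
    by (simp add: sum.If_cases)
  finally show ?thesis .
qed

locale symmetric_edges =
  fixes adj :: "'v::finite \<Rightarrow> 'v \<Rightarrow> bool" and A :: "'v \<Rightarrow> 'v \<Rightarrow> (real^'n) list"
  assumes adj_sym: "\<And>i j. adj i j \<Longrightarrow> adj j i"
    and A_sym: "\<And>i j. adj i j \<Longrightarrow> A i j = A j i"
begin

lemma inner_proj_laplacian:
  "inner W (proj_laplacian adj A U) =
    (\<Sum>i\<in>UNIV. \<Sum>j\<in>{j. adj i j}. inner (W $ i - W $ j) (Pmul (A i j) (U $ i - U $ j))) / 2"
proof -
  define T where "T i j = inner (W $ i) (Pmul (A i j) (U $ i - U $ j))" for i j
  have fwd: "inner W (proj_laplacian adj A U) = (\<Sum>i\<in>UNIV. \<Sum>j\<in>{j. adj i j}. T i j)"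
    by (simp add: proj_laplacian_def inner_vec_def[of W] inner_sum_right T_def)
  also have "\<dots> = (\<Sum>i\<in>UNIV. \<Sum>j\<in>{j. adj i j}. T j i)"
    by (rule sum_adjacent_swap) (fact adj_sym)
  also have "\<dots> = (\<Sum>i\<in>UNIV. \<Sum>j\<in>{j. adj i j}. - inner (W $ j) (Pmul (A i j) (U $ i - U $ j)))"
  proof (intro sum.cong refl)
    fix i j assume "j \<in> {j. adj i j}"
    then have "A j i = A i j" using A_sym by (metis mem_Collect_eq)
    moreover have "U $ j - U $ i = - (U $ i - U $ j)" by simp
    ultimately show "T j i = - inner (W $ j) (Pmul (A i j) (U $ i - U $ j))"
      by (simp only: T_def linear_neg[OF linear_Pmul] inner_minus_right)
  qed
  finally have bwd: "inner W (proj_laplacian adj A U) =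
    (\<Sum>i\<in>UNIV. \<Sum>j\<in>{j. adj i j}. - inner (W $ j) (Pmul (A i j) (U $ i - U $ j)))" .
  have "2 * inner W (proj_laplacian adj A U) =
    (\<Sum>i\<in>UNIV. \<Sum>j\<in>{j. adj i j}. T i j) +
    (\<Sum>i\<in>UNIV. \<Sum>j\<in>{j. adj i j}. - inner (W $ j) (Pmul (A i j) (U $ i - U $ j)))"
    using arg_cong2[OF fwd bwd, of "(+)"] by simp
  also have "\<dots> =
    (\<Sum>i\<in>UNIV. \<Sum>j\<in>{j. adj i j}. T i j - inner (W $ j) (Pmul (A i j) (U $ i - U $ j)))"
    by (simp add: sum_subtractf sum_negf)
  also have "\<dots> = (\<Sum>i\<in>UNIV. \<Sum>j\<in>{j. adj i j}. inner (W $ i - W $ j) (Pmul (A i j) (U $ i - U $ j)))"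
    by (simp add: T_def inner_diff_left)
  finally show ?thesis by simp
qed

end

locale edge_projections = symmetric_edges adj A
  for adj :: "'v::finite \<Rightarrow> 'v \<Rightarrow> bool" and A :: "'v \<Rightarrow> 'v \<Rightarrow> (real^'n) list" +
  assumes gram_invertible: "\<And>i j. adj i j \<Longrightarrow> invertible_mat (gram (A i j))"
begin

lemma inner_proj_laplacian_commute:
  "inner W (proj_laplacian adj A U) = inner (proj_laplacian adj A W) U"
proof -
  have "inner (W $ i - W $ j) (Pmul (A i j) (U $ i - U $ j)) =
      inner (U $ i - U $ j) (Pmul (A i j) (W $ i - W $ j))" if "adj i j" for i j
    using inner_Pmul_commute[OF gram_invertible[OF that]] by (metis inner_commute)
  then show ?thesis
    unfolding inner_commute[of "proj_laplacian adj A W" U] inner_proj_laplacian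
    by (intro arg_cong[where f="\<lambda>s::real. s / 2"] sum.cong refl) simp
qed

lemma inner_proj_laplacian_self:
  "inner U (proj_laplacian adj A U) =
    (\<Sum>i\<in>UNIV. \<Sum>j\<in>{j. adj i j}. (norm (Pmul (A i j) (U $ i - U $ j)))\<^sup>2) / 2"
proof -
  have "inner (U $ i - U $ j) (Pmul (A i j) (U $ i - U $ j)) =
      (norm (Pmul (A i j) (U $ i - U $ j)))\<^sup>2" if "adj i j" for i j
    using inner_Pmul_self[OF gram_invertible[OF that]] .
  then show ?thesis
    unfolding inner_proj_laplacian
    by (intro arg_cong[where f="\<lambda>s::real. s / 2"] sum.cong refl) simp
qed

lemma inner_proj_laplacian_self_nonneg: "0 \<le> inner U (proj_laplacian adj A U)"
  by (simp add: inner_proj_laplacian_self sum_nonneg)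

lemma proj_laplacian_eq_0_imp_edge_Pmul_eq_0:
  assumes "proj_laplacian adj A U = 0" and "adj i j"
  shows "Pmul (A i j) (U $ i - U $ j) = 0"
proof -
  have "(\<Sum>i\<in>UNIV. \<Sum>j\<in>{j. adj i j}. (norm (Pmul (A i j) (U $ i - U $ j)))\<^sup>2) = 0"
    using inner_proj_laplacian_self[of U] assms(1) by simp
  then show ?thesis
    using assms(2) by (simp add: sum_nonneg_eq_0_iff sum_nonneg)
qed

lemma feasible_add_kernel:
  assumes "feasible adj A b x" and "proj_laplacian adj A U = 0"
  shows "feasible adj A b (\<lambda>i. x i + U $ i)"
  unfolding feasible_def
proof (intro allI impI)
  fix i j assume ij: "adj i j"
  have "inner r (U $ i - U $ j) = 0" if "r \<in> set (A i j)" for r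
    using Pmul_eq_0_imp_orthogonal_rows[OF gram_invertible[OF ij]
        proj_laplacian_eq_0_imp_edge_Pmul_eq_0[OF assms(2) ij] that] .
  then have "Amul (A i j) (x i + U $ i - (x j + U $ j)) = Amul (A i j) (x i - x j)"
    by (simp add: Amul_def add_diff_add inner_add_right)
  then show "Amul (A i j) (x i + U $ i - (x j + U $ j)) = b i j"
    using assms(1) ij by (simp add: feasible_def)
qed

end

lemma strict_convex_fun_above_tangent:
  fixes F :: "'a::real_inner \<Rightarrow> real"
  assumes deriv: "\<And>z. (F has_derivative (\<lambda>h. inner (G z) h)) (at z)"
    and strict: "strict_convex_fun F"
    and "p \<noteq> q"
  shows "inner (G p) (q - p) < F q - F p"
proof -
  have chord: "F (p + t *\<^sub>R (q - p)) < F p + t * (F q - F p)"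
    if "p \<noteq> q" "0 < t" "t < 1" for p q :: 'a and t :: real
  proof -
    have "F (t *\<^sub>R q + (1 - t) *\<^sub>R p) < t * F q + (1 - t) * F p"
      using strict[unfolded strict_convex_fun_def, rule_format, of q p t] that by auto
    moreover have "t *\<^sub>R q + (1 - t) *\<^sub>R p = p + t *\<^sub>R (q - p)"
      by (simp add: scaleR_diff_left scaleR_diff_right)
    moreover have "t * F q + (1 - t) * F p = F p + t * (F q - F p)"
      by (simp add: right_diff_distrib left_diff_distrib)
    ultimately show ?thesis
      by simp
  qed
  have tangent: "inner (G p) (q - p) \<le> F q - F p" for p q :: 'a
  proof (cases "p = q")
    case False
    let ?psi = "\<lambda>t. F (p + t *\<^sub>R (q - p))"
    have "((\<lambda>t. p + t *\<^sub>R (q - p)) has_derivative (\<lambda>t. t *\<^sub>R (q - p))) (at 0 within {0<..})"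
      by (auto intro!: derivative_eq_intros)
    from has_derivative_compose[OF this deriv]
    have "(?psi has_real_derivative inner (G p) (q - p)) (at 0 within {0<..})"
      unfolding has_field_derivative_def
      by (rule has_derivative_eq_rhs) (simp add: fun_eq_iff mult.commute)
    then have "((\<lambda>t. (?psi t - ?psi 0) / t) \<longlongrightarrow> inner (G p) (q - p)) (at_right 0)"
      by (simp add: has_field_derivative_iff)
    moreover have "eventually (\<lambda>t. (?psi t - ?psi 0) / t \<le> F q - F p) (at_right 0)"
      unfolding eventually_at_right_field
    proof (intro exI[of _ 1] conjI allI impI)
      fix t :: real assume "0 < t" "t < 1"
      then have "?psi t - ?psi 0 \<le> t * (F q - F p)"
        using chord[OF False, of t] by simp
      then show "(?psi t - ?psi 0) / t \<le> F q - F p"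
        using \<open>0 < t\<close> by (simp add: divide_le_eq mult.commute)
    qed simp
    ultimately show ?thesis
      by (rule tendsto_upperbound) simp
  qed simp
  define m where "m = p + (1 / 2) *\<^sub>R (q - p)"
  have "inner (G p) (q - p) = 2 * inner (G p) (m - p)"
    by (simp add: m_def)
  also have "\<dots> \<le> 2 * (F m - F p)"
    using tangent[of p m] by simp
  also have "\<dots> < F q - F p"
    using chord[OF \<open>p \<noteq> q\<close>, of "1 / 2"] unfolding m_def by (simp add: field_simps)
  finally show ?thesis .
qed

lemma strict_convex_fun_gradient_monotone:
  fixes F :: "'a::real_inner \<Rightarrow> real"
  assumes deriv: "\<And>z. (F has_derivative (\<lambda>h. inner (G z) h)) (at z)"
    and strict: "strict_convex_fun F"
    and "p \<noteq> q"
  shows "0 < inner (q - p) (G q - G p)"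
proof -
  have "inner (G p) (q - p) < F q - F p" and "inner (G q) (p - q) < F p - F q"
    using strict_convex_fun_above_tangent[OF deriv strict] \<open>p \<noteq> q\<close> by auto
  then show ?thesis
    by (simp add: inner_diff_left inner_diff_right inner_commute)
qed

lemma has_derivative_sum_vec_nth:
  fixes f :: "'v::finite \<Rightarrow> 'a::real_inner \<Rightarrow> real"
  assumes "\<And>i z. (f i has_derivative (\<lambda>h. inner (g i z) h)) (at z)"
  shows "((\<lambda>X. \<Sum>i\<in>UNIV. f i (X $ i)) has_derivative (\<lambda>H. inner (\<chi> i. g i (X $ i)) H)) (at X)"
proof -
  have "((\<lambda>X. f i (X $ i)) has_derivative (\<lambda>H. inner (g i (X $ i)) (H $ i))) (at X)" for i
    by (rule has_derivative_compose[OF bounded_linear_imp_has_derivative[OF bounded_linear_vec_nth]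
          assms])
  then have "((\<lambda>X. \<Sum>i\<in>UNIV. f i (X $ i)) has_derivative
      (\<lambda>H. \<Sum>i\<in>UNIV. inner (g i (X $ i)) (H $ i))) (at X)"
    by (rule has_derivative_sum)
  then show ?thesis by (simp add: inner_vec_def)
qed

lemma orthogonal_kernel_imp_in_range:
  fixes L :: "'a::euclidean_space \<Rightarrow> 'a"
  assumes "linear L"
    and self_adjoint: "\<And>u w. inner u (L w) = inner (L u) w"
    and orth: "\<And>d. L d = 0 \<Longrightarrow> inner g d = 0"
  shows "g \<in> range L"
proof -
  obtain y z where y: "y \<in> span (range L)"
    and z: "\<And>w. w \<in> span (range L) \<Longrightarrow> Linear_Algebra.orthogonal z w" and g: "g = y + z"
    using orthogonal_subspace_decomp_exists by metis
  have span_range: "span (range L) = range L"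
    using linear_subspace_image[OF assms(1) subspace_UNIV] by (rule span_eq_iff[THEN iffD2])
  have "inner (L z) (L z) = inner z (L (L z))"
    by (simp add: self_adjoint)
  also have "\<dots> = 0"
    using z[of "L (L z)"] by (simp add: span_range Linear_Algebra.orthogonal_def)
  finally have "inner g z = 0"
    by (simp add: orth)
  moreover have "inner y z = 0"
    using z[OF y] by (simp add: Linear_Algebra.orthogonal_def inner_commute)
  ultimately have "z = 0"
    by (simp add: g inner_add_left)
  then show ?thesis
    using y g span_range by simp
qed

lemma line_minimum_imp_orthogonal_gradient:
  fixes F :: "'a::real_inner \<Rightarrow> real"
  assumes deriv: "(F has_derivative (\<lambda>h. inner g h)) (at x)"
    and min: "\<And>t. F x \<le> F (x + t *\<^sub>R d)"
  shows "inner g d = 0"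
proof -
  have "((\<lambda>t. x + t *\<^sub>R d) has_derivative (\<lambda>t. t *\<^sub>R d)) (at 0)"
    by (auto intro!: derivative_eq_intros)
  moreover have "(F has_derivative (\<lambda>h. inner g h)) (at (x + 0 *\<^sub>R d))"
    using deriv by simp
  ultimately have "((\<lambda>t. F (x + t *\<^sub>R d)) has_real_derivative inner g d) (at 0)"
    unfolding has_field_derivative_def
    by (rule has_derivative_compose[THEN has_derivative_eq_rhs]) (simp add: fun_eq_iff)
  then show ?thesis
    by (rule DERIV_local_min[of _ _ _ 1]) (use min in auto)
qed

context edge_projections
begin

lemma exists_lagrange_multiplier:
  fixes F :: "real^'n^'v \<Rightarrow> real"
  assumes deriv: "(F has_derivative (\<lambda>H. inner g H)) (at X)"
    and feasible: "feasible adj A b (\<lambda>i. X $ i)"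
    and min: "\<And>Y. feasible adj A b (\<lambda>i. Y $ i) \<Longrightarrow> F X \<le> F Y"
  shows "\<exists>M. g + proj_laplacian adj A M = 0"
proof -
  have "inner g D = 0" if "proj_laplacian adj A D = 0" for D
  proof (rule line_minimum_imp_orthogonal_gradient[OF deriv])
    fix t :: real
    have "proj_laplacian adj A (t *\<^sub>R D) = 0"
      by (simp add: linear_scale[OF linear_proj_laplacian] that)
    then have "feasible adj A b (\<lambda>i. X $ i + (t *\<^sub>R D) $ i)"
      by (rule feasible_add_kernel[OF feasible])
    then show "F X \<le> F (X + t *\<^sub>R D)"
      using min by simp
  qed
  then have "- g \<in> range (proj_laplacian adj A)"
    by (intro orthogonal_kernel_imp_in_range linear_proj_laplacian inner_proj_laplacian_commute)
      simp
  then obtain M where M: "- g = proj_laplacian adj A M"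
    by blast
  show ?thesis
    by (rule exI[of _ M]) (simp flip: M)
qed

lemma solves_problem_imp_lagrange_multiplier:
  assumes grad: "\<And>i z. (f i has_derivative (\<lambda>h. inner (gradf i z) h)) (at z)"
    and sol: "solves_problem f adj A b xs"
  shows "\<exists>M. (\<chi> i. gradf i (xs i)) + proj_laplacian adj A M = 0"
proof -
  have "\<exists>M. (\<chi> i. gradf i ((\<chi> k. xs k) $ i)) + proj_laplacian adj A M = 0"
  proof (rule exists_lagrange_multiplier[OF has_derivative_sum_vec_nth[OF grad]])
    show "feasible adj A b (\<lambda>i. (\<chi> k. xs k) $ i)"
      using sol by (simp add: solves_problem_def)
    show "(\<Sum>i\<in>UNIV. f i ((\<chi> k. xs k) $ i)) \<le> (\<Sum>i\<in>UNIV. f i (Y $ i))"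
      if "feasible adj A b (\<lambda>i. Y $ i)" for Y
      using sol that by (simp add: solves_problem_def)
  qed
  then show ?thesis
    by simp
qed

end

lemma has_vector_derivative_vec_lambda:
  assumes "\<And>i. ((\<lambda>t. f t i) has_vector_derivative v i) (at t within S)"
  shows "((\<lambda>t. \<chi> i. f t i) has_vector_derivative (\<chi> i. v i)) (at t within S)"
proof -
  have "((\<lambda>y. (((\<chi> i. f y i) - (\<chi> i. f t i)) - (y - t) *\<^sub>R (\<chi> i. v i)) /\<^sub>R norm (y - t)) \<longlongrightarrow> 0)
      (at t within S)"
  proof (rule vec_tendstoI)
    fix i
    show "((\<lambda>y. ((((\<chi> i. f y i) - (\<chi> i. f t i)) - (y - t) *\<^sub>R (\<chi> i. v i)) /\<^sub>R norm (y - t)) $ i)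
        \<longlongrightarrow> 0 $ i) (at t within S)"
      using assms[of i] by (simp add: has_vector_derivative_def has_derivative_at_within)
  qed
  then show ?thesis
    by (simp add: has_vector_derivative_def has_derivative_at_within bounded_linear_scaleR_left)
qed

lemma has_real_derivative_norm_diff_squared:
  fixes g :: "real \<Rightarrow> 'a::real_inner"
  assumes "(g has_vector_derivative v) (at t within S)"
  shows "((\<lambda>s. (norm (g s - c))\<^sup>2) has_real_derivative 2 * inner (g t - c) v) (at t within S)"
proof -
  have d: "((\<lambda>s. g s - c) has_derivative (\<lambda>h. h *\<^sub>R v)) (at t within S)"
    using assms by (auto simp: has_vector_derivative_def intro!: derivative_eq_intros)
  show ?thesis
    unfolding has_field_derivative_def power2_norm_eq_inner
    by (rule has_derivative_eq_rhs[OF has_derivative_inner[OF d d]])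
      (simp add: fun_eq_iff inner_commute algebra_simps)
qed

lemma lipschitz_on_vector_derivative_bound:
  fixes g :: "real \<Rightarrow> 'a::real_normed_vector"
  assumes "convex S"
    and deriv: "\<And>t. t \<in> S \<Longrightarrow> (g has_vector_derivative v t) (at t within S)"
    and bound: "\<And>t. t \<in> S \<Longrightarrow> norm (v t) \<le> B"
    and "0 \<le> B"
  shows "B-lipschitz_on S g"
proof (rule lipschitz_onI)
  fix s t assume "s \<in> S" "t \<in> S"
  have "norm (g s - g t) \<le> B * norm (s - t)"
  proof (rule differentiable_bound[OF \<open>convex S\<close>])
    fix u assume "u \<in> S"
    show "(g has_derivative (\<lambda>h. h *\<^sub>R v u)) (at u within S)"
      using deriv[OF \<open>u \<in> S\<close>] by (simp add: has_vector_derivative_def)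
    show "onorm (\<lambda>h::real. h *\<^sub>R v u) \<le> B"
      using bound[OF \<open>u \<in> S\<close>] by (simp add: onorm_scaleR_left[OF bounded_linear_ident] onorm_id)
  qed fact+
  then show "dist (g s) (g t) \<le> B * dist s t"
    by (simp add: dist_norm)
qed fact

lemma uniformly_continuous_on_bounded_field:
  fixes X :: "real \<Rightarrow> 'a::real_normed_vector" and Z :: "real \<Rightarrow> 'b::topological_space"
  assumes deriv: "\<And>t. a \<le> t \<Longrightarrow> (X has_vector_derivative Phi (Z t)) (at t within {a..})"
    and "continuous_on C Phi" and "compact C" and Z_in: "\<And>t. a \<le> t \<Longrightarrow> Z t \<in> C"
  shows "uniformly_continuous_on {a..} X"
proof -
  obtain B where "0 < B" and B: "\<And>z. z \<in> C \<Longrightarrow> norm (Phi z) \<le> B"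
    using compact_continuous_image[OF assms(2,3)]
    by (fastforce dest!: compact_imp_bounded simp: bounded_pos)
  have "B-lipschitz_on {a..} X"
    by (rule lipschitz_on_vector_derivative_bound[where v="\<lambda>t. Phi (Z t)"])
      (use deriv B Z_in \<open>0 < B\<close> in auto)
  then show ?thesis
    by (rule lipschitz_on_uniformly_continuous)
qed

lemma decrease_of_derivative_bound:
  fixes V :: "real \<Rightarrow> real"
  assumes deriv: "\<And>t. a \<le> t \<Longrightarrow> (V has_real_derivative V' t) (at t within {a..})"
    and "a \<le> r" "r \<le> s"
    and bound: "\<And>u. r < u \<Longrightarrow> u < s \<Longrightarrow> V' u \<le> - c"
  shows "V s + c * (s - r) \<le> V r"
proof -
  have "continuous_on {a..} V"
    using deriv by (intro DERIV_continuous_on) auto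
  then have cont: "continuous_on {r..s} V"
    by (rule continuous_on_subset) (use \<open>a \<le> r\<close> in auto)
  have "V s + c * s \<le> V r + c * r"
  proof (rule DERIV_nonpos_imp_decreasing_open[OF \<open>r \<le> s\<close>])
    fix u assume u: "r < u" "u < s"
    have "(V has_real_derivative V' u) (at u within {a<..})"
      using deriv[of u] u \<open>a \<le> r\<close> by (auto intro: DERIV_subset)
    then have "(V has_real_derivative V' u) (at u)"
      using u \<open>a \<le> r\<close> by (simp add: at_within_open[of u "{a<..}"])
    then have "((\<lambda>u. V u + c * u) has_real_derivative V' u + c) (at u)"
      by (auto intro!: derivative_eq_intros)
    then show "\<exists>y. ((\<lambda>u. V u + c * u) has_real_derivative y) (at u) \<and> y \<le> 0"
      using bound[OF u] by (intro exI[of _ "V' u + c"]) auto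
  qed (intro continuous_intros cont)
  then show ?thesis
    by (simp add: algebra_simps)
qed

lemma compact_pos_imp_uniform_lower_bound:
  fixes W :: "'a::topological_space \<Rightarrow> real"
  assumes "compact K" and "continuous_on K W" and pos: "\<And>y. y \<in> K \<Longrightarrow> 0 < W y"
  obtains c where "0 < c" and "\<And>y. y \<in> K \<Longrightarrow> c \<le> W y"
proof (cases "K = {}")
  case False
  obtain y0 where "y0 \<in> K" and "\<And>y. y \<in> K \<Longrightarrow> W y0 \<le> W y"
    using continuous_attains_inf[OF assms(1) False assms(2)] by blast
  then show ?thesis
    using that[of "W y0"] pos by blast
qed (use that[of 1] in auto)

lemma excursion_lower_bound:
  fixes X :: "real \<Rightarrow> 'a::metric_space" and W :: "'a \<Rightarrow> real"
  assumes "0 < e" and "compact S" and X_in: "\<And>t. a \<le> t \<Longrightarrow> X t \<in> S"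
    and X_uc: "uniformly_continuous_on {a..} X"
    and W_cont: "continuous_on S W"
    and W_pos: "\<And>y. y \<in> S \<Longrightarrow> y \<noteq> x0 \<Longrightarrow> 0 < W y"
  obtains c d where "0 < c" and "0 < d"
    and "\<And>t u. a \<le> t \<Longrightarrow> e \<le> dist (X t) x0 \<Longrightarrow> t \<le> u \<Longrightarrow> u < t + d \<Longrightarrow> c \<le> W (X u)"
proof -
  let ?K = "S \<inter> {y. e / 2 \<le> dist y x0}"
  have "compact ?K"
    using \<open>compact S\<close> by (intro compact_Int_closed closed_Collect_le continuous_intros)
  moreover have "continuous_on ?K W"
    using W_cont by (rule continuous_on_subset) auto
  moreover have "0 < W y" if "y \<in> ?K" for y
    using that \<open>0 < e\<close> by (intro W_pos) auto
  ultimately obtain c where c: "0 < c" "\<And>y. y \<in> ?K \<Longrightarrow> c \<le> W y"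
    using compact_pos_imp_uniform_lower_bound by metis
  obtain d where "0 < d"
    and close: "\<And>s t. a \<le> s \<Longrightarrow> a \<le> t \<Longrightarrow> dist s t < d \<Longrightarrow> dist (X s) (X t) < e / 2"
    using uniformly_continuous_onE[OF X_uc, of "e / 2"] \<open>0 < e\<close> by (auto simp: dist_commute)
  have "c \<le> W (X u)" if "a \<le> t" "e \<le> dist (X t) x0" "t \<le> u" "u < t + d" for t u
  proof -
    have "dist (X u) (X t) < e / 2"
      using close[of u t] that by (auto simp: dist_real_def)
    then have "e / 2 \<le> dist (X u) x0"
      using that(2) dist_triangle[of "X t" x0 "X u"] by (simp add: dist_commute)
    then show ?thesis
      using c X_in[of u] that by auto
  qed
  with c(1) \<open>0 < d\<close> that show ?thesis
    by blast
qed

lemma dissipation_imp_tendsto: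
  fixes X :: "real \<Rightarrow> 'a::metric_space" and W :: "'a \<Rightarrow> real"
  assumes V_deriv: "\<And>t. a \<le> t \<Longrightarrow> (V has_real_derivative V' t) (at t within {a..})"
    and dissipation: "\<And>t. a \<le> t \<Longrightarrow> V' t \<le> - W (X t)"
    and V_nonneg: "\<And>t. a \<le> t \<Longrightarrow> 0 \<le> V t"
    and "compact S" and X_in: "\<And>t. a \<le> t \<Longrightarrow> X t \<in> S"
    and X_uc: "uniformly_continuous_on {a..} X"
    and W_cont: "continuous_on S W"
    and W_nonneg: "\<And>y. y \<in> S \<Longrightarrow> 0 \<le> W y"
    and W_pos: "\<And>y. y \<in> S \<Longrightarrow> y \<noteq> x0 \<Longrightarrow> 0 < W y"
  shows "(X \<longlongrightarrow> x0) at_top"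
proof (rule ccontr)
  assume "\<not> (X \<longlongrightarrow> x0) at_top"
  then obtain e where "0 < e" and far: "\<And>N. \<exists>t\<ge>N. e \<le> dist (X t) x0"
    unfolding tendsto_iff eventually_at_top_linorder by (auto simp: not_less)
  obtain c d where "0 < c" "0 < d"
    and stay: "\<And>t u. a \<le> t \<Longrightarrow> e \<le> dist (X t) x0 \<Longrightarrow> t \<le> u \<Longrightarrow> u < t + d \<Longrightarrow> c \<le> W (X u)"
    using excursion_lower_bound[OF \<open>0 < e\<close> \<open>compact S\<close> X_in X_uc W_cont W_pos] by metis
  have decrease: "V s + b * (s - r) \<le> V r"
    if "a \<le> r" "r \<le> s" "\<And>u. r < u \<Longrightarrow> u < s \<Longrightarrow> b \<le> W (X u)" for r s b
  proof (rule decrease_of_derivative_bound[where V'=V'])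
    fix u assume "r < u" "u < s"
    then show "V' u \<le> - b"
      using dissipation[of u] that(1) that(3)[of u] by simp
  qed (use V_deriv that in auto)
  txt \<open>Once \<open>V T\<close> is within \<open>c d\<close> of the infimum of \<open>V\<close>, a single later excursion of
    \<open>X\<close> to distance \<open>e\<close> from \<open>x0\<close> makes \<open>V\<close> drop by \<open>c d\<close>, below its infimum.\<close>
  have bdd: "bdd_below (V ` {a..})"
    using V_nonneg by (auto intro: bdd_belowI[of _ 0])
  have "\<exists>v\<in>V ` {a..}. v < Inf (V ` {a..}) + c * d"
    by (rule cInf_less_iff[OF _ bdd, THEN iffD1]) (use \<open>0 < c\<close> \<open>0 < d\<close> in auto)
  then obtain T where T: "a \<le> T" "V T < Inf (V ` {a..}) + c * d"
    by auto
  obtain t where t: "T \<le> t" "e \<le> dist (X t) x0"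
    using far by blast
  have "V (t + d) + c * d \<le> V t"
    using decrease[of t "t + d" c] stay[of t] T t \<open>0 < d\<close> by auto
  moreover have "V t \<le> V T"
    using decrease[of T t 0] W_nonneg X_in T t by auto
  moreover have "Inf (V ` {a..}) \<le> V (t + d)"
    using bdd T t \<open>0 < d\<close> by (auto intro!: cInf_lower)
  ultimately show False
    using T by linarith
qed

lemma primal_dual_lyapunov_derivative:
  fixes X Lam :: "real \<Rightarrow> 'a::real_inner" and G L :: "'a \<Rightarrow> 'a"
  assumes L_self_adjoint: "\<And>u w. inner u (L w) = inner (L u) w"
    and X_deriv: "(X has_vector_derivative
        - (G (X t) - G xs) - L (Lam t - ls) - L (X t - xs)) (at t within S)"
    and Lam_deriv: "(Lam has_vector_derivative L (X t - xs)) (at t within S)"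
  shows "((\<lambda>s. (norm (X s - xs))\<^sup>2 + (norm (Lam s - ls))\<^sup>2) has_real_derivative
      - 2 * inner (X t - xs) (G (X t) - G xs) - 2 * inner (X t - xs) (L (X t - xs))) (at t within S)"
proof -
  have "((\<lambda>s. (norm (X s - xs))\<^sup>2 + (norm (Lam s - ls))\<^sup>2) has_real_derivative
      2 * inner (X t - xs) (- (G (X t) - G xs) - L (Lam t - ls) - L (X t - xs)) +
      2 * inner (Lam t - ls) (L (X t - xs))) (at t within S)"
    by (intro DERIV_add has_real_derivative_norm_diff_squared X_deriv Lam_deriv)
  moreover have "inner (X t - xs) (L (Lam t - ls)) = inner (Lam t - ls) (L (X t - xs))"
    by (subst L_self_adjoint) (rule inner_commute)
  then have "2 * inner (X t - xs) (- (G (X t) - G xs) - L (Lam t - ls) - L (X t - xs)) +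
      2 * inner (Lam t - ls) (L (X t - xs)) =
      - 2 * inner (X t - xs) (G (X t) - G xs) - 2 * inner (X t - xs) (L (X t - xs))"
    by (simp add: inner_diff_right)
  ultimately show ?thesis
    by simp
qed

lemma primal_dual_flow_tendsto:
  fixes X Lam :: "real \<Rightarrow> 'a::euclidean_space" and G L :: "'a \<Rightarrow> 'a"
  assumes "linear L"
    and L_self_adjoint: "\<And>u w. inner u (L w) = inner (L u) w"
    and L_nonneg: "\<And>u. 0 \<le> inner u (L u)"
    and G_cont: "continuous_on UNIV G"
    and G_mono: "\<And>y. y \<noteq> xs \<Longrightarrow> 0 < inner (y - xs) (G y - G xs)"
    and X_deriv: "\<And>t. 0 \<le> t \<Longrightarrow> (X has_vector_derivative
        - (G (X t) - G xs) - L (Lam t - ls) - L (X t - xs)) (at t within {0..})"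
    and Lam_deriv: "\<And>t. 0 \<le> t \<Longrightarrow> (Lam has_vector_derivative L (X t - xs)) (at t within {0..})"
  shows "(X \<longlongrightarrow> xs) at_top"
proof -
  define W where "W y = 2 * inner (y - xs) (G y - G xs)" for y
  define V where "V t = (norm (X t - xs))\<^sup>2 + (norm (Lam t - ls))\<^sup>2" for t
  define V' where "V' t = - W (X t) - 2 * inner (X t - xs) (L (X t - xs))" for t
  have V_deriv: "(V has_real_derivative V' t) (at t within {0..})" if "0 \<le> t" for t
    using primal_dual_lyapunov_derivative[OF L_self_adjoint X_deriv[OF that] Lam_deriv[OF that]]
    unfolding V_def[abs_def] V'_def W_def by simp
  have W_nonneg: "0 \<le> W y" for y
    using G_mono[of y] by (cases "y = xs") (auto simp: W_def)
  have dissipation: "V' t \<le> - W (X t)" for t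
    using L_nonneg[of "X t - xs"] by (simp add: V'_def)
  have V_le: "V t \<le> V 0" if "0 \<le> t" for t
  proof -
    have "V t + 0 * (t - 0) \<le> V 0"
    proof (rule decrease_of_derivative_bound[where V'=V'])
      show "V' u \<le> - 0" for u
        using dissipation[of u] W_nonneg[of "X u"] by simp
    qed (use V_deriv that in auto)
    then show ?thesis
      by simp
  qed
  define R where "R = sqrt (V 0)"
  have X_in: "X t \<in> cball xs R" and Lam_in: "Lam t \<in> cball ls R" if "0 \<le> t" for t
  proof -
    have "norm (X t - xs) \<le> sqrt (V t)" and "norm (Lam t - ls) \<le> sqrt (V t)"
      by (auto simp: V_def intro!: real_le_rsqrt)
    then show "X t \<in> cball xs R" and "Lam t \<in> cball ls R"
      using V_le[OF that] by (auto simp: R_def dist_norm norm_minus_commute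
          intro: order_trans real_sqrt_le_mono)
  qed
  have L_cont: "continuous_on UNIV L"
    using \<open>linear L\<close> by (simp add: linear_continuous_on linear_conv_bounded_linear)
  show ?thesis
  proof (rule dissipation_imp_tendsto[where V=V and W=W and S="cball xs R"])
    show "uniformly_continuous_on {0..} X"
    proof (rule uniformly_continuous_on_bounded_field[where Z="\<lambda>t. (X t, Lam t)"
          and C="cball xs R \<times> cball ls R"])
      show "continuous_on (cball xs R \<times> cball ls R)
          (\<lambda>z. - (G (fst z) - G xs) - L (snd z - ls) - L (fst z - xs))"
        by (intro continuous_intros continuous_on_compose2[OF G_cont]
            continuous_on_compose2[OF L_cont]) auto
    qed (use X_deriv X_in Lam_in in \<open>auto intro: compact_Times\<close>)
    show "continuous_on (cball xs R) W"
      unfolding W_def by (intro continuous_intros continuous_on_subset[OF G_cont]) auto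
  qed (use V_deriv dissipation X_in W_nonneg G_mono in \<open>auto simp: V_def W_def\<close>)
qed

lemma has_vector_derivative_distributed_update:
  fixes x lam :: "real \<Rightarrow> 'v::finite \<Rightarrow> real^'n"
  assumes feasible: "feasible adj A b xs"
    and multiplier: "(\<chi> i. gradf i (xs i)) + proj_laplacian adj A M = 0"
    and ode_x: "\<And>i. ((\<lambda>s. x s i) has_vector_derivative
        (- gradf i (x t i)
         - (\<Sum>j\<in>{j. adj i j}. Pmul (A i j) (lam t i - lam t j))
         - (\<Sum>j\<in>{j. adj i j}. Pmul (A i j) (x t i - x t j) - bbar (A i j) (b i j)))) (at t within S)"
    and ode_lam: "\<And>i. ((\<lambda>s. lam s i) has_vector_derivative
        (\<Sum>j\<in>{j. adj i j}. Pmul (A i j) (x t i - x t j) - bbar (A i j) (b i j))) (at t within S)"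
  shows "((\<lambda>s. \<chi> i. x s i) has_vector_derivative
      - ((\<chi> i. gradf i (x t i)) - (\<chi> i. gradf i (xs i)))
      - proj_laplacian adj A ((\<chi> i. lam t i) - M)
      - proj_laplacian adj A ((\<chi> i. x t i) - (\<chi> i. xs i))) (at t within S)"
    and "((\<lambda>s. \<chi> i. lam s i) has_vector_derivative
      proj_laplacian adj A ((\<chi> i. x t i) - (\<chi> i. xs i))) (at t within S)"
proof -
  let ?L = "proj_laplacian adj A"
  have edge_terms: "(\<Sum>j\<in>{j. adj i j}. Pmul (A i j) (x t i - x t j) - bbar (A i j) (b i j)) =
      ?L ((\<chi> i. x t i) - (\<chi> i. xs i)) $ i" for i
    using sum_Pmul_diff_bbar_eq_proj_laplacian[OF feasible, of i "\<chi> i. x t i"] by simp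
  have "?L (\<chi> i. lam t i) = ?L ((\<chi> i. lam t i) - M) + ?L M"
    by (simp add: linear_diff[OF linear_proj_laplacian])
  also have "\<dots> = ?L ((\<chi> i. lam t i) - M) - (\<chi> i. gradf i (xs i))"
    using multiplier by (simp add: eq_neg_iff_add_eq_0 add.commute)
  finally have "?L (\<chi> i. lam t i) $ i = (?L ((\<chi> i. lam t i) - M) - (\<chi> i. gradf i (xs i))) $ i"
    for i by simp
  then have lam_terms: "(\<Sum>j\<in>{j. adj i j}. Pmul (A i j) (lam t i - lam t j)) =
      (?L ((\<chi> i. lam t i) - M) - (\<chi> i. gradf i (xs i))) $ i" for i
    by (simp only: proj_laplacian_def[of adj A "\<chi> i. lam t i"] vec_lambda_beta)
  then have "(\<chi> i. - gradf i (x t i) - (\<Sum>j\<in>{j. adj i j}. Pmul (A i j) (lam t i - lam t j))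
      - (\<Sum>j\<in>{j. adj i j}. Pmul (A i j) (x t i - x t j) - bbar (A i j) (b i j))) =
      - ((\<chi> i. gradf i (x t i)) - (\<chi> i. gradf i (xs i))) - ?L ((\<chi> i. lam t i) - M)
      - ?L ((\<chi> i. x t i) - (\<chi> i. xs i))"
    by (simp add: Finite_Cartesian_Product.vec_eq_iff edge_terms lam_terms)
  moreover have "((\<lambda>s. \<chi> i. x s i) has_vector_derivative
      (\<chi> i. - gradf i (x t i) - (\<Sum>j\<in>{j. adj i j}. Pmul (A i j) (lam t i - lam t j))
        - (\<Sum>j\<in>{j. adj i j}. Pmul (A i j) (x t i - x t j) - bbar (A i j) (b i j))))
      (at t within S)"
    by (rule has_vector_derivative_vec_lambda) (rule ode_x)
  ultimately show "((\<lambda>s. \<chi> i. x s i) has_vector_derivative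
      - ((\<chi> i. gradf i (x t i)) - (\<chi> i. gradf i (xs i)))
      - ?L ((\<chi> i. lam t i) - M) - ?L ((\<chi> i. x t i) - (\<chi> i. xs i))) (at t within S)"
    by simp
  have "((\<lambda>s. \<chi> i. lam s i) has_vector_derivative
      (\<chi> i. \<Sum>j\<in>{j. adj i j}. Pmul (A i j) (x t i - x t j) - bbar (A i j) (b i j)))
      (at t within S)"
    by (rule has_vector_derivative_vec_lambda) (rule ode_lam)
  then show "((\<lambda>s. \<chi> i. lam s i) has_vector_derivative ?L ((\<chi> i. x t i) - (\<chi> i. xs i)))
      (at t within S)"
    by (simp add: edge_terms)
qed

theorem theorem1:
  fixes f :: "'v::finite \<Rightarrow> real^'n \<Rightarrow> real"
    and gradf :: "'v \<Rightarrow> real^'n \<Rightarrow> real^'n"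
    and adj :: "'v \<Rightarrow> 'v \<Rightarrow> bool"
    and A :: "'v \<Rightarrow> 'v \<Rightarrow> (real^'n) list"
    and b :: "'v \<Rightarrow> 'v \<Rightarrow> real list"
    and es :: "('v \<times> 'v) list"
    and x lam :: "real \<Rightarrow> 'v \<Rightarrow> real^'n"
  assumes grad: "\<And>i z. (f i has_derivative (\<lambda>h. inner (gradf i z) h)) (at z)"
    and grad_cont: "\<And>i. continuous_on UNIV (gradf i)"
    and convex: "\<And>i. convex_on UNIV (f i)"
    and strict: "strict_convex_fun (\<lambda>X :: real^'n^'v. \<Sum>i\<in>UNIV. f i (X $ i))"
    and sym: "\<And>i j. adj i j \<Longrightarrow> adj j i"
    and irrefl: "\<And>i. \<not> adj i i"
    and dims: "\<And>i j. adj i j \<Longrightarrow> length (b i j) = length (A i j)"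
    and gram_inv: "\<And>i j. adj i j \<Longrightarrow> invertible_mat (gram (A i j))"
    and existence: "\<exists>xs. solves_problem f adj A b xs"
    and consistency: "\<And>i j. adj i j \<Longrightarrow> A i j = A j i \<and> b i j = map uminus (b j i)"
    and connected: "connected_graph adj"
    and orient: "orientation adj es"
    and wellconf: "well_configured es A"
    and ode_x: "\<And>t i. t \<ge> 0 \<Longrightarrow> ((\<lambda>s. x s i) has_vector_derivative
        (- gradf i (x t i)
         - (\<Sum>j\<in>{j. adj i j}. Pmul (A i j) (lam t i - lam t j))
         - (\<Sum>j\<in>{j. adj i j}. Pmul (A i j) (x t i - x t j) - bbar (A i j) (b i j)))) (at t within {0..})"
    and ode_lam: "\<And>t i. t \<ge> 0 \<Longrightarrow> ((\<lambda>s. lam s i) has_vector_derivative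
        (\<Sum>j\<in>{j. adj i j}. Pmul (A i j) (x t i - x t j) - bbar (A i j) (b i j))) (at t within {0..})"
  shows "\<exists>xstar. (\<forall>i. ((\<lambda>t. x t i) \<longlongrightarrow> xstar i) at_top) \<and> solves_problem f adj A b xstar"
proof -
  interpret edge_projections adj A
    by unfold_locales (metis sym, metis consistency, metis gram_inv)
  obtain xs where sol: "solves_problem f adj A b xs"
    using existence by blast
  then have feasible: "feasible adj A b xs"
    by (simp add: solves_problem_def)
  obtain M where M: "(\<chi> i. gradf i (xs i)) + proj_laplacian adj A M = 0"
    using solves_problem_imp_lagrange_multiplier[OF grad sol] by blast
  have X_deriv: "((\<lambda>s. \<chi> i. x s i) has_vector_derivative
      - ((\<chi> i. gradf i (x t i)) - (\<chi> i. gradf i (xs i)))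
      - proj_laplacian adj A ((\<chi> i. lam t i) - M)
      - proj_laplacian adj A ((\<chi> i. x t i) - (\<chi> i. xs i))) (at t within {0..})" if "0 \<le> t" for t
    by (rule has_vector_derivative_distributed_update(1)[where b=b])
      (rule feasible M ode_x[OF that] ode_lam[OF that])+
  have Lam_deriv: "((\<lambda>s. \<chi> i. lam s i) has_vector_derivative
      proj_laplacian adj A ((\<chi> i. x t i) - (\<chi> i. xs i))) (at t within {0..})" if "0 \<le> t" for t
    by (rule has_vector_derivative_distributed_update(2)[where b=b])
      (rule feasible M ode_x[OF that] ode_lam[OF that])+
  have "((\<lambda>t. \<chi> i. x t i) \<longlongrightarrow> (\<chi> i. xs i)) at_top"
  proof (rule primal_dual_flow_tendsto[where G="\<lambda>Y. \<chi> i. gradf i (Y $ i)"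
        and Lam="\<lambda>t. \<chi> i. lam t i" and ls=M, OF linear_proj_laplacian])
    show "inner u (proj_laplacian adj A w) = inner (proj_laplacian adj A u) w" for u w
      by (rule inner_proj_laplacian_commute)
    show "0 \<le> inner u (proj_laplacian adj A u)" for u
      by (rule inner_proj_laplacian_self_nonneg)
    show "continuous_on UNIV (\<lambda>Y. \<chi> i. gradf i (Y $ i))"
      by (intro continuous_on_vec_lambda continuous_on_compose2[OF grad_cont] continuous_intros) auto
    show "0 < inner (Y - (\<chi> i. xs i)) ((\<chi> i. gradf i (Y $ i)) - (\<chi> i. gradf i ((\<chi> i. xs i) $ i)))"
      if "Y \<noteq> (\<chi> i. xs i)" for Y
      using that by (intro strict_convex_fun_gradient_monotone[OF has_derivative_sum_vec_nth[OF grad]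
          strict]) simp
  qed (use X_deriv Lam_deriv in simp)+
  then have "((\<lambda>t. x t i) \<longlongrightarrow> xs i) at_top" for i
    using tendsto_vec_nth[of "\<lambda>t. \<chi> i. x t i" "\<chi> i. xs i" at_top i] by simp
  with sol show ?thesis
    by blast
qed

end
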